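(* Let $\pi_n,\pi\in\mathcal P(\mathbb R^d)$ and let $Q_n,Q$ be $M$-cell quantizers. If $\pi_nQ_n\to\pi Q$ in total variation, then for every $m\in\{1,\dots,M\}$ with $\pi(Q^{-1}(m))>0$ we have $\hat\pi(m,\pi_n,Q_n)\to\hat\pi(m,\pi,Q)$ in total variation.
   Context: Let $\phi(\cdot|x)$, $x\in\mathbb R^d$, be a family of probability densities on $\mathbb R^d$ (the transition densities of the source $x_{t+1}=f(x_t,w_t)$), jointly measurable and uniformly bounded: $\phi(z|x)\le C$ for all $x,z$. An $M$-cell quantizer is a Borel map $Q:\mathbb R^d\to\{1,\dots,M\}$; for $P\in\mathcal P(\mathbb R^d)$, $PQ$ is the measure on $\mathbb R^d\times\{1,\dots,M\}$ with $PQ(A\times\{i\})=P(A\cap Q^{-1}(i))$. For $\pi\in\mathcal P(\mathbb R^d)$, a quantizer $Q$ and $m$ with $\pi(Q^{-1}(m))>0$, $\hat\pi(m,\pi,Q)$ is the probability measure with density $$z\mapsto\frac{1}{\pi(Q^{-1}(m))}\int_{Q^{-1}(m)}\phi(z|x)\,\pi(dx)$$ (the conditional law of $x_{t+1}$ given $\pi_t=\pi$, $Q_t=Q$, $q_t=m$). *)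

theory Defs
  imports "HOL-Probability.Probability"
begin

definition quantizer :: "nat \<Rightarrow> ('a::topological_space \<Rightarrow> nat) \<Rightarrow> bool" where
  "quantizer M Q \<longleftrightarrow> Q \<in> borel \<rightarrow>\<^sub>M count_space {1..M}"

text \<open>The joint measure PQ on R^d x {1..M}: PQ(A x {i}) = P(A \<inter> Q^{-1}(i)).\<close>
definition quant_joint :: "nat \<Rightarrow> 'a::topological_space measure \<Rightarrow> ('a \<Rightarrow> nat) \<Rightarrow> ('a \<times> nat) measure" where
  "quant_joint M P Q = distr P (borel \<Otimes>\<^sub>M count_space {1..M}) (\<lambda>x. (x, Q x))"

definition tv_dist :: "'a measure \<Rightarrow> 'a measure \<Rightarrow> real" where
  "tv_dist \<mu> \<nu> = (SUP A \<in> sets \<mu>. \<bar>measure \<mu> A - measure \<nu> A\<bar>)"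

text \<open>The predictor pi-hat(m, pi, Q): the measure on R^d with density
  z \<mapsto> (1 / pi(Q^{-1}(m))) * integral over Q^{-1}(m) of phi(z|x) pi(dx).
  Here phi x z stands for phi(z|x).\<close>
definition pred_meas :: "('a::euclidean_space \<Rightarrow> 'a \<Rightarrow> real) \<Rightarrow> nat \<Rightarrow> 'a measure \<Rightarrow> ('a \<Rightarrow> nat) \<Rightarrow> 'a measure" where
  "pred_meas \<phi> m \<pi> Q = density lborel
     (\<lambda>z. ennreal ((1 / measure \<pi> (Q -` {m})) * (LINT x : Q -` {m} | \<pi>. \<phi> x z)))"

end

theory Submission
  imports Defs
begin

text \<open>
  Write \<open>B = Q\<^sup>-\<^sup>1(m)\<close> and \<open>P(x, A) = \<integral>\<^sub>A \<phi>(z|x) dz\<close>. By Tonelli the predictor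
  assigns to \<open>A\<close> the mass \<open>(\<integral>\<^sub>B P(x, A) \<pi>(dx)) / \<pi>(B)\<close>. Numerator and denominator are
  integrals against \<open>\<pi>Q\<close> of the \<open>[0, 1]\<close>-valued functions \<open>(x, i) \<mapsto> [i = m] P(x, A)\<close>
  and \<open>(x, i) \<mapsto> [i = m]\<close>, and such an integral moves by at most the total variation distance
  \<open>\<delta>\<close> between the joint laws. Once \<open>\<delta> < \<pi>(B) / 2\<close> the quotient therefore moves by at most
  \<open>4 \<delta> / \<pi>(B)\<close>, uniformly in \<open>A\<close>.
\<close>

lemma abs_measure_diff_le_tv_dist:
  assumes "prob_space \<mu>" "prob_space \<nu>" "A \<in> sets \<mu>"
  shows "\<bar>measure \<mu> A - measure \<nu> A\<bar> \<le> tv_dist \<mu> \<nu>"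
  unfolding tv_dist_def
proof (rule cSUP_upper[OF assms(3)])
  have "\<bar>measure \<mu> A - measure \<nu> A\<bar> \<le> 1" for A
    using prob_space.prob_le_1[OF assms(1)] prob_space.prob_le_1[OF assms(2)]
      measure_nonneg[of \<mu> A] measure_nonneg[of \<nu> A] by (smt (verit))
  then show "bdd_above ((\<lambda>A. \<bar>measure \<mu> A - measure \<nu> A\<bar>) ` sets \<mu>)"
    by (intro bdd_aboveI2)
qed

lemma tv_dist_nonneg: "prob_space \<mu> \<Longrightarrow> prob_space \<nu> \<Longrightarrow> 0 \<le> tv_dist \<mu> \<nu>"
  using abs_measure_diff_le_tv_dist[OF _ _ sets.empty_sets] by fastforce

lemma tv_dist_le:
  assumes "\<And>A. A \<in> sets \<mu> \<Longrightarrow> \<bar>measure \<mu> A - measure \<nu> A\<bar> \<le> K"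
  shows "tv_dist \<mu> \<nu> \<le> K"
  unfolding tv_dist_def using assms by (intro cSUP_least) auto

lemma card_of_nat_le_eq_nat_floor:
  fixes y :: real
  assumes "0 \<le> y" "y \<le> real k"
  shows "card {j \<in> {1..k}. real j \<le> y} = nat \<lfloor>y\<rfloor>"
proof -
  have "\<lfloor>y\<rfloor> \<le> int k"
    using assms(2) by (simp add: floor_le_iff)
  then have floor_le: "nat \<lfloor>y\<rfloor> \<le> k"
    by simp
  have le_floor: "real j \<le> y \<longleftrightarrow> j \<le> nat \<lfloor>y\<rfloor>" for j
  proof -
    have "real j \<le> y \<longleftrightarrow> int j \<le> \<lfloor>y\<rfloor>" by (simp add: le_floor_iff)
    also have "\<dots> \<longleftrightarrow> j \<le> nat \<lfloor>y\<rfloor>" using assms(1) by (simp add: le_nat_iff)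
    finally show ?thesis .
  qed
  have "{j \<in> {1..k}. real j \<le> y} = {1..nat \<lfloor>y\<rfloor>}"
    unfolding le_floor using floor_le by auto
  then show ?thesis by simp
qed

lemma (in prob_space) abs_integral_diff_le:
  fixes f g :: "'a \<Rightarrow> real"
  assumes "integrable M f" "integrable M g" "\<And>x. x \<in> space M \<Longrightarrow> \<bar>f x - g x\<bar> \<le> e"
  shows "\<bar>(\<integral>x. f x \<partial>M) - (\<integral>x. g x \<partial>M)\<bar> \<le> e"
proof -
  have "\<bar>(\<integral>x. f x \<partial>M) - (\<integral>x. g x \<partial>M)\<bar> = \<bar>\<integral>x. f x - g x \<partial>M\<bar>"
    using assms(1,2) by simp
  also have "\<dots> \<le> (\<integral>x. \<bar>f x - g x\<bar> \<partial>M)"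
    by (rule integral_abs_bound)
  also have "\<dots> \<le> (\<integral>x. e \<partial>M)"
    using assms by (intro integral_mono) auto
  finally show ?thesis by (simp add: prob_space)
qed

lemma abs_integral_diff_le_tv_dist_add:
  fixes f :: "'a \<Rightarrow> real"
  assumes \<mu>: "prob_space \<mu>" and \<nu>: "prob_space \<nu>" and sets_eq: "sets \<mu> = sets \<nu>"
    and f[measurable]: "f \<in> borel_measurable \<mu>"
    and f01: "\<And>x. x \<in> space \<mu> \<Longrightarrow> 0 \<le> f x \<and> f x \<le> 1"
    and k: "0 < k"
  shows "\<bar>(\<integral>x. f x \<partial>\<mu>) - (\<integral>x. f x \<partial>\<nu>)\<bar> \<le> tv_dist \<mu> \<nu> + 2 / real k"
proof -
  define S where "S j = {x \<in> space \<mu>. real j \<le> real k * f x}" for j :: nat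
  \<comment> \<open>the staircase \<open>\<lfloor>k f\<rfloor> / k\<close> as an average of indicators of level sets, so that its
    integral against any measure is an average of measures of sets\<close>
  define s where "s x = (\<Sum>j\<in>{1..k}. indicator (S j) x) / real k" for x
  have S_sets: "S j \<in> sets \<mu>" for j
    unfolding S_def by measurable
  have s_meas: "s \<in> borel_measurable \<mu>"
    unfolding s_def using S_sets by measurable
  have s_close: "\<bar>f x - s x\<bar> \<le> 1 / real k" if x: "x \<in> space \<mu>" for x
  proof -
    define y where "y = real k * f x"
    have y: "0 \<le> y" "y \<le> real k"
      using f01[OF x] by (auto simp: y_def intro: mult_left_le)
    have "(\<Sum>j\<in>{1..k}. indicator (S j) x :: real) = real (card {j \<in> {1..k}. real j \<le> y})"
      using x by (simp add: S_def y_def indicator_def of_bool_def[symmetric] Int_def)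
    also have "\<dots> = real (nat \<lfloor>y\<rfloor>)"
      using card_of_nat_le_eq_nat_floor[OF y] by simp
    finally have "s x = real (nat \<lfloor>y\<rfloor>) / real k"
      by (simp add: s_def)
    moreover have "real (nat \<lfloor>y\<rfloor>) \<le> y" "y < real (nat \<lfloor>y\<rfloor>) + 1"
      using y(1) by (simp_all add: of_nat_floor)
    ultimately show ?thesis
      using k by (simp add: y_def field_simps abs_le_iff)
  qed
  have s_integral: "(\<integral>x. s x \<partial>M) = (\<Sum>j\<in>{1..k}. measure M (S j)) / real k"
    if "prob_space M" "sets M = sets \<mu>" for M
  proof -
    interpret M: prob_space M by fact
    have "S j \<in> sets M" for j
      using S_sets that(2) by simp
    then show ?thesis
      by (simp add: s_def integral_sum M.emeasure_space_1 integrable_real_indicator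
          less_top[symmetric])
  qed
  have "\<bar>(\<integral>x. s x \<partial>\<mu>) - (\<integral>x. s x \<partial>\<nu>)\<bar> = \<bar>\<Sum>j\<in>{1..k}. measure \<mu> (S j) - measure \<nu> (S j)\<bar> / real k"
    using s_integral[OF \<mu>] s_integral[OF \<nu> sets_eq[symmetric]]
    by (simp add: sum_subtractf diff_divide_distrib[symmetric])
  also have "\<dots> \<le> (\<Sum>j\<in>{1..k}. \<bar>measure \<mu> (S j) - measure \<nu> (S j)\<bar>) / real k"
    by (intro divide_right_mono sum_abs) simp
  also have "\<dots> \<le> (\<Sum>j\<in>{1..k}. tv_dist \<mu> \<nu>) / real k"
    by (intro divide_right_mono sum_mono abs_measure_diff_le_tv_dist[OF \<mu> \<nu> S_sets]) simp
  also have "\<dots> = tv_dist \<mu> \<nu>"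
    using k by simp
  finally have s_diff: "\<bar>(\<integral>x. s x \<partial>\<mu>) - (\<integral>x. s x \<partial>\<nu>)\<bar> \<le> tv_dist \<mu> \<nu>" .
  have f_s_diff: "\<bar>(\<integral>x. f x \<partial>M) - (\<integral>x. s x \<partial>M)\<bar> \<le> 1 / real k"
    if "prob_space M" "sets M = sets \<mu>" for M
  proof -
    interpret M: prob_space M by fact
    have space_M: "space M = space \<mu>"
      using sets_eq_imp_space_eq[OF that(2)] .
    have [measurable]: "f \<in> borel_measurable M" "s \<in> borel_measurable M"
      using f s_meas measurable_cong_sets[OF that(2) refl] by blast+
    have "1 / real k \<le> 1"
      using k by simp
    have "\<bar>s x\<bar> \<le> 2" if "x \<in> space M" for x
    proof -
      have x: "x \<in> space \<mu>"
        using that space_M by simp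
      show ?thesis
        using s_close[OF x] f01[OF x] \<open>1 / real k \<le> 1\<close> by linarith
    qed
    then have "integrable M s"
      by (intro M.integrable_const_bound[where B=2] AE_I2) auto
    moreover have "integrable M f"
      using f01 space_M by (intro M.integrable_const_bound[where B=1] AE_I2) auto
    ultimately show ?thesis
      using s_close space_M by (intro M.abs_integral_diff_le) auto
  qed
  show ?thesis
    using f_s_diff[OF \<mu> refl] f_s_diff[OF \<nu> sets_eq[symmetric]] s_diff by linarith
qed

lemma abs_integral_diff_le_tv_dist:
  fixes f :: "'a \<Rightarrow> real"
  assumes "prob_space \<mu>" "prob_space \<nu>" "sets \<mu> = sets \<nu>" "f \<in> borel_measurable \<mu>"
    and "\<And>x. x \<in> space \<mu> \<Longrightarrow> 0 \<le> f x \<and> f x \<le> 1"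
  shows "\<bar>(\<integral>x. f x \<partial>\<mu>) - (\<integral>x. f x \<partial>\<nu>)\<bar> \<le> tv_dist \<mu> \<nu>"
proof (rule field_le_epsilon)
  fix e :: real
  assume "0 < e"
  then obtain n where "inverse (real (Suc n)) < e / 2"
    using reals_Archimedean[of "e / 2"] by auto
  then have "2 / real (Suc n) < e"
    by (simp add: inverse_eq_divide)
  then show "\<bar>(\<integral>x. f x \<partial>\<mu>) - (\<integral>x. f x \<partial>\<nu>)\<bar> \<le> tv_dist \<mu> \<nu> + e"
    using abs_integral_diff_le_tv_dist_add[OF assms, of "Suc n"] by simp
qed

lemma quantizer_measurable:
  assumes "quantizer M Q" "sets P = sets borel"
  shows "Q \<in> P \<rightarrow>\<^sub>M count_space {1..M}"
  using assms measurable_cong_sets[OF assms(2) refl] unfolding quantizer_def by blast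

lemma quantizer_vimage_sets:
  assumes "quantizer M Q"
  shows "Q -` {m} \<in> sets borel"
proof -
  have Q: "Q \<in> borel \<rightarrow>\<^sub>M count_space {1..M}"
    using assms unfolding quantizer_def .
  have "Q -` ({m} \<inter> {1..M}) \<inter> space borel \<in> sets borel"
    by (rule measurable_sets[OF Q]) simp
  moreover have "Q -` ({m} \<inter> {1..M}) = Q -` {m}"
    using measurable_space[OF Q] by auto
  ultimately show ?thesis
    by simp
qed

lemma measurable_quant_joint_map:
  assumes "quantizer M Q" "sets P = sets borel"
  shows "(\<lambda>x. (x, Q x)) \<in> P \<rightarrow>\<^sub>M borel \<Otimes>\<^sub>M count_space {1..M}"
  using measurable_ident_sets[OF assms(2)] quantizer_measurable[OF assms]
  by (rule measurable_Pair)

lemma prob_space_quant_joint: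
  assumes "quantizer M Q" "prob_space P" "sets P = sets borel"
  shows "prob_space (quant_joint M P Q)"
  unfolding quant_joint_def
  using assms(2) measurable_quant_joint_map[OF assms(1,3)] by (rule prob_space.prob_space_distr)

lemma sets_quant_joint: "sets (quant_joint M P Q) = sets (borel \<Otimes>\<^sub>M count_space {1..M})"
  unfolding quant_joint_def by (rule sets_distr)

lemma borel_measurable_cell_weight:
  fixes g :: "'a::topological_space \<Rightarrow> real"
  assumes "g \<in> borel_measurable borel"
  shows "(\<lambda>w. g (fst w) * indicator {m} (snd w)) \<in> borel_measurable (borel \<Otimes>\<^sub>M count_space {1..M})"
proof -
  have "(\<lambda>w. g (fst w)) \<in> borel_measurable (borel \<Otimes>\<^sub>M count_space {1..M})"
    using assms by measurable
  moreover have "(\<lambda>w. indicator {m} (snd w) :: real) \<in> borel_measurable (borel \<Otimes>\<^sub>M count_space {1..M})"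
    by (rule measurable_compose[OF measurable_snd]) (simp add: measurable_count_space_eq1)
  ultimately show ?thesis
    by (rule borel_measurable_times)
qed

lemma integral_quant_joint_cell:
  fixes g :: "'a::topological_space \<Rightarrow> real"
  assumes "quantizer M Q" "sets P = sets borel" "g \<in> borel_measurable borel"
  shows "(\<integral>w. g (fst w) * indicator {m} (snd w) \<partial>quant_joint M P Q)
    = (\<integral>x. indicator (Q -` {m}) x * g x \<partial>P)"
  unfolding quant_joint_def
  by (subst integral_distr[OF measurable_quant_joint_map[OF assms(1,2)]
        borel_measurable_cell_weight[OF assms(3)]])
    (simp add: indicator_def mult.commute)

lemma abs_cell_integral_diff_le_tv_dist:
  fixes g :: "'a::topological_space \<Rightarrow> real"
  assumes Q: "quantizer M Q" "quantizer M Q'"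
    and P: "prob_space P" "prob_space P'" "sets P = sets borel" "sets P' = sets borel"
    and g: "g \<in> borel_measurable borel" "\<And>x. 0 \<le> g x" "\<And>x. g x \<le> 1"
  shows "\<bar>(\<integral>x. indicator (Q' -` {m}) x * g x \<partial>P') - (\<integral>x. indicator (Q -` {m}) x * g x \<partial>P)\<bar>
    \<le> tv_dist (quant_joint M P' Q') (quant_joint M P Q)"
proof -
  have "(\<lambda>w. g (fst w) * indicator {m} (snd w)) \<in> borel_measurable (quant_joint M P' Q')"
    using borel_measurable_cell_weight[OF g(1)]
    by (simp only: measurable_cong_sets[OF sets_quant_joint refl])
  then have "\<bar>(\<integral>w. g (fst w) * indicator {m} (snd w) \<partial>quant_joint M P' Q')
      - (\<integral>w. g (fst w) * indicator {m} (snd w) \<partial>quant_joint M P Q)\<bar>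
    \<le> tv_dist (quant_joint M P' Q') (quant_joint M P Q)"
    using g(2,3)
    by (intro abs_integral_diff_le_tv_dist prob_space_quant_joint Q P)
      (auto simp: sets_quant_joint indicator_def)
  then show ?thesis
    by (simp add: integral_quant_joint_cell Q P g(1))
qed

lemma abs_divide_diff_le:
  fixes a a' b b' d :: real
  assumes "\<bar>a' - a\<bar> \<le> d" "\<bar>b' - b\<bar> \<le> d" "0 \<le> a" "a \<le> b" "0 < b" "b / 2 < b'"
  shows "\<bar>a' / b' - a / b\<bar> \<le> 4 * d / b"
proof -
  have "0 < b'"
    using assms(5,6) by linarith
  have "0 \<le> d"
    using assms(1) by linarith
  have "\<bar>(a' - a) * b + a * (b - b')\<bar> \<le> \<bar>a' - a\<bar> * b + a * \<bar>b' - b\<bar>"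
    using \<open>0 < b\<close> assms(3) abs_triangle_ineq[of "(a' - a) * b" "a * (b - b')"]
    by (simp add: abs_mult abs_minus_commute)
  also have "\<dots> \<le> d * b + b * d"
    using \<open>0 < b\<close> assms by (intro add_mono mult_mono) auto
  finally have num: "\<bar>(a' - a) * b + a * (b - b')\<bar> \<le> 2 * d * b"
    by (simp add: algebra_simps)
  have "a' / b' - a / b = ((a' - a) * b + a * (b - b')) / (b' * b)"
    using \<open>0 < b\<close> \<open>0 < b'\<close> by (simp add: field_simps)
  then have "\<bar>a' / b' - a / b\<bar> = \<bar>(a' - a) * b + a * (b - b')\<bar> / (b' * b)"
    using \<open>0 < b\<close> \<open>0 < b'\<close> by (simp add: abs_divide abs_mult)
  also have "\<dots> \<le> 2 * d * b / (b' * b)"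
    using num \<open>0 < b\<close> \<open>0 < b'\<close> by (intro divide_right_mono) simp_all
  also have "\<dots> = 2 * d / b'"
    using \<open>0 < b\<close> by simp
  also have "\<dots> \<le> 2 * d / (b / 2)"
    using \<open>0 < b\<close> \<open>0 \<le> d\<close> assms(6) by (intro divide_left_mono) auto
  finally show ?thesis
    by simp
qed

lemma (in finite_measure) integral_indicator_mult_le_measure:
  fixes g :: "'a \<Rightarrow> real"
  assumes "B \<in> sets M" "\<And>x. g x \<le> 1"
  shows "(\<integral>x. indicator B x * g x \<partial>M) \<le> measure M B"
proof -
  have "(\<integral>x. indicator B x * g x \<partial>M) \<le> (\<integral>x. indicator B x \<partial>M)"
    using assms by (intro integral_mono' integrable_real_indicator)
      (auto simp: indicator_def less_top[symmetric])
  then show ?thesis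
    using assms(1) by simp
qed

lemma abs_measure_cell_diff_le_tv_dist:
  assumes "quantizer M Q" "quantizer M Q'"
    and "prob_space P" "prob_space P'" "sets P = sets borel" "sets P' = sets borel"
  shows "\<bar>measure P' (Q' -` {m}) - measure P (Q -` {m})\<bar>
    \<le> tv_dist (quant_joint M P' Q') (quant_joint M P Q)"
proof -
  have "space P = UNIV" "space P' = UNIV"
    using assms(5,6) by (auto dest: sets_eq_imp_space_eq)
  with abs_cell_integral_diff_le_tv_dist[OF assms, of "\<lambda>_. 1" m] show ?thesis
    by simp
qed

locale transition_density =
  fixes \<phi> :: "'a::euclidean_space \<Rightarrow> 'a \<Rightarrow> real" and C :: real
  assumes measurable_phi: "(\<lambda>(x, z). \<phi> x z) \<in> borel_measurable (borel \<Otimes>\<^sub>M borel)"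
    and phi_nonneg: "\<And>x z. 0 \<le> \<phi> x z"
    and phi_density: "\<And>x. (\<integral>\<^sup>+ z. ennreal (\<phi> x z) \<partial>lborel) = 1"
    and phi_bounded: "\<And>x z. \<phi> x z \<le> C"
begin

definition transition_prob :: "'a \<Rightarrow> 'a set \<Rightarrow> real" where
  "transition_prob x A = enn2real (\<integral>\<^sup>+ z. ennreal (\<phi> x z) * indicator A z \<partial>lborel)"

lemma measurable_phi_sets_cong:
  assumes "sets P = sets borel" "sets P' = sets borel"
  shows "(\<lambda>(x, z). \<phi> x z) \<in> borel_measurable (P \<Otimes>\<^sub>M P')"
proof -
  have "sets (P \<Otimes>\<^sub>M P') = sets (borel \<Otimes>\<^sub>M borel)"
    using assms by (intro sets_pair_measure_cong)
  then show ?thesis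
    using measurable_phi measurable_cong_sets by blast
qed

lemma measurable_phi_swap:
  assumes "sets P = sets borel" "sets P' = sets borel"
  shows "(\<lambda>(z, x). \<phi> x z) \<in> borel_measurable (P' \<Otimes>\<^sub>M P)"
  using measurable_pair_swap[OF measurable_phi_sets_cong[OF assms]] by (simp add: case_prod_beta)

lemma nn_integral_phi_le_1: "(\<integral>\<^sup>+ z. ennreal (\<phi> x z) * indicator A z \<partial>lborel) \<le> 1"
proof -
  have "(\<integral>\<^sup>+ z. ennreal (\<phi> x z) * indicator A z \<partial>lborel) \<le> (\<integral>\<^sup>+ z. ennreal (\<phi> x z) \<partial>lborel)"
    by (intro nn_integral_mono) (simp add: indicator_def)
  then show ?thesis
    using phi_density by simp
qed

lemma ennreal_transition_prob:
  "ennreal (transition_prob x A) = (\<integral>\<^sup>+ z. ennreal (\<phi> x z) * indicator A z \<partial>lborel)"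
  using nn_integral_phi_le_1[of x A] unfolding transition_prob_def
  by (simp add: ennreal_enn2real_if) (metis ennreal_one_neq_top neq_top_trans)

lemma transition_prob_nonneg: "0 \<le> transition_prob x A"
  by (simp add: transition_prob_def)

lemma transition_prob_le_1: "transition_prob x A \<le> 1"
  using nn_integral_phi_le_1[of x A] ennreal_transition_prob[of x A] by (metis ennreal_le_1)

lemma borel_measurable_transition_prob:
  assumes "A \<in> sets borel"
  shows "(\<lambda>x. transition_prob x A) \<in> borel_measurable borel"
proof -
  have [measurable]: "(\<lambda>(x, z). \<phi> x z) \<in> borel_measurable (borel \<Otimes>\<^sub>M lborel)"
    by (rule measurable_phi_sets_cong) simp_all
  have [measurable]: "A \<in> sets lborel"
    using assms by simp
  have "(\<lambda>(x, z). ennreal (\<phi> x z) * indicator A z) \<in> borel_measurable (borel \<Otimes>\<^sub>M lborel)"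
    unfolding case_prod_beta by measurable
  then show ?thesis
    unfolding transition_prob_def
    by (intro borel_measurable_enn2real lborel.borel_measurable_nn_integral) simp
qed

lemma ennreal_cell_integral_phi:
  assumes P: "prob_space P" "sets P = sets borel" and B: "B \<in> sets borel"
  shows "ennreal (\<integral>x. indicator B x * \<phi> x z \<partial>P) = (\<integral>\<^sup>+ x. ennreal (indicator B x * \<phi> x z) \<partial>P)"
proof -
  interpret P: prob_space P by fact
  have [measurable]: "(\<lambda>(x, z). \<phi> x z) \<in> borel_measurable (P \<Otimes>\<^sub>M lborel)" "B \<in> sets P"
    using measurable_phi_sets_cong[OF P(2)] B P(2) by auto
  have "(\<lambda>x. indicator B x * (\<lambda>(x, z). \<phi> x z) (x, z)) \<in> borel_measurable P"
    by measurable
  then have "integrable P (\<lambda>x. indicator B x * \<phi> x z)"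
    using phi_nonneg phi_bounded order_trans[OF phi_nonneg phi_bounded]
    by (intro P.integrable_const_bound[where B=C] AE_I2) (auto simp: indicator_def)
  then show ?thesis
    using phi_nonneg by (intro nn_integral_eq_integral[symmetric] AE_I2) (auto simp: indicator_def)
qed

lemma pred_meas_eq_density:
  assumes P: "prob_space P" "sets P = sets borel" and B: "Q -` {m} \<in> sets borel"
  shows "pred_meas \<phi> m P Q = density lborel (\<lambda>z. ennreal (1 / measure P (Q -` {m}))
    * (\<integral>\<^sup>+ x. ennreal (indicator (Q -` {m}) x * \<phi> x z) \<partial>P))"
  unfolding pred_meas_def
proof (intro arg_cong[where f="density lborel"] ext)
  fix z
  have "0 \<le> (\<integral>x. indicator (Q -` {m}) x * \<phi> x z \<partial>P)"
    using phi_nonneg by (intro integral_nonneg_AE AE_I2) simp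
  then show "ennreal (1 / measure P (Q -` {m}) * (LINT x:Q -` {m}|P. \<phi> x z))
    = ennreal (1 / measure P (Q -` {m})) * (\<integral>\<^sup>+ x. ennreal (indicator (Q -` {m}) x * \<phi> x z) \<partial>P)"
    unfolding set_lebesgue_integral_def ennreal_cell_integral_phi[OF P B, symmetric]
    by (subst ennreal_mult[symmetric]) simp_all
qed

lemma emeasure_pred_meas:
  assumes P: "prob_space P" "sets P = sets borel"
    and B: "Q -` {m} \<in> sets borel" and A: "A \<in> sets borel"
  shows "emeasure (pred_meas \<phi> m P Q) A = ennreal (1 / measure P (Q -` {m}))
    * (\<integral>\<^sup>+ x. ennreal (indicator (Q -` {m}) x * transition_prob x A) \<partial>P)"
proof -
  interpret P: prob_space P by fact
  interpret PL: pair_sigma_finite P lborel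
    by (simp add: pair_sigma_finite_def P.sigma_finite_measure_axioms lborel.sigma_finite_measure_axioms)
  define c where "c = ennreal (1 / measure P (Q -` {m}))"
  define F where "F z = (\<integral>\<^sup>+ x. ennreal (indicator (Q -` {m}) x * \<phi> x z) \<partial>P)" for z
  have [measurable]: "(\<lambda>(x, z). \<phi> x z) \<in> borel_measurable (P \<Otimes>\<^sub>M lborel)"
    "(\<lambda>(z, x). \<phi> x z) \<in> borel_measurable (lborel \<Otimes>\<^sub>M P)"
    "Q -` {m} \<in> sets P" "A \<in> sets lborel"
    using measurable_phi_sets_cong[OF P(2)] measurable_phi_swap[OF P(2)] B A P(2) by auto
  have "(\<lambda>(z, x). ennreal (indicator (Q -` {m}) x * \<phi> x z)) \<in> borel_measurable (lborel \<Otimes>\<^sub>M P)"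
    unfolding case_prod_beta by measurable
  from P.borel_measurable_nn_integral_fst[OF this]
  have F_meas: "F \<in> borel_measurable lborel"
    unfolding F_def by simp
  have "(\<lambda>(x, z). ennreal (indicator (Q -` {m}) x * \<phi> x z) * indicator A z)
      \<in> borel_measurable (P \<Otimes>\<^sub>M lborel)"
    unfolding case_prod_beta by measurable
  note Fubini = PL.Fubini'[OF this]
  have "emeasure (pred_meas \<phi> m P Q) A = (\<integral>\<^sup>+ z. c * F z * indicator A z \<partial>lborel)"
    using F_meas A unfolding pred_meas_eq_density[OF P B] c_def F_def
    by (simp add: emeasure_density)
  also have "\<dots> = c * (\<integral>\<^sup>+ z. (\<integral>\<^sup>+ x. ennreal (indicator (Q -` {m}) x * \<phi> x z) * indicator A z \<partial>P) \<partial>lborel)"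
    using F_meas unfolding F_def
    by (simp add: nn_integral_cmult nn_integral_multc mult.assoc)
  also have "\<dots> = c * (\<integral>\<^sup>+ x. (\<integral>\<^sup>+ z. ennreal (indicator (Q -` {m}) x * \<phi> x z) * indicator A z \<partial>lborel) \<partial>P)"
    by (simp add: Fubini)
  also have "\<dots> = c * (\<integral>\<^sup>+ x. ennreal (indicator (Q -` {m}) x * transition_prob x A) \<partial>P)"
    by (intro arg_cong2[where f="(*)"] refl nn_integral_cong)
      (simp add: indicator_def ennreal_transition_prob)
  finally show ?thesis
    unfolding c_def .
qed

lemma measure_pred_meas:
  assumes P: "prob_space P" "sets P = sets borel"
    and B: "Q -` {m} \<in> sets borel" and A: "A \<in> sets borel"
  shows "measure (pred_meas \<phi> m P Q) A
    = (\<integral>x. indicator (Q -` {m}) x * transition_prob x A \<partial>P) / measure P (Q -` {m})"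
proof -
  interpret P: prob_space P by fact
  define J where "J = (\<integral>x. indicator (Q -` {m}) x * transition_prob x A \<partial>P)"
  have [measurable]: "(\<lambda>x. transition_prob x A) \<in> borel_measurable P" "Q -` {m} \<in> sets P"
    using borel_measurable_transition_prob[OF A] measurable_cong_sets[OF P(2) refl] B P(2)
    by auto
  have "(\<lambda>x. indicator (Q -` {m}) x * transition_prob x A) \<in> borel_measurable P"
    by measurable
  then have "integrable P (\<lambda>x. indicator (Q -` {m}) x * transition_prob x A)"
    using transition_prob_nonneg transition_prob_le_1
    by (intro P.integrable_const_bound[where B=1] AE_I2) (auto simp: indicator_def)
  then have "(\<integral>\<^sup>+ x. ennreal (indicator (Q -` {m}) x * transition_prob x A) \<partial>P) = ennreal J"
    unfolding J_def using transition_prob_nonneg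
    by (intro nn_integral_eq_integral AE_I2) auto
  moreover have "0 \<le> J"
    unfolding J_def using transition_prob_nonneg by (intro integral_nonneg_AE AE_I2) simp
  ultimately have "emeasure (pred_meas \<phi> m P Q) A = ennreal (1 / measure P (Q -` {m}) * J)"
    using emeasure_pred_meas[OF P B A] by (subst ennreal_mult) simp_all
  then show ?thesis
    using \<open>0 \<le> J\<close> unfolding J_def by (simp add: measure_def)
qed

lemma prob_space_pred_meas:
  assumes P: "prob_space P" "sets P = sets borel"
    and B: "Q -` {m} \<in> sets borel" and pos: "0 < measure P (Q -` {m})"
  shows "prob_space (pred_meas \<phi> m P Q)"
proof (rule prob_spaceI)
  interpret P: prob_space P by fact
  have "transition_prob x UNIV = 1" for x
    using phi_density by (simp add: transition_prob_def)
  then have "emeasure (pred_meas \<phi> m P Q) UNIV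
      = ennreal (1 / measure P (Q -` {m})) * (\<integral>\<^sup>+ x. indicator (Q -` {m}) x \<partial>P)"
    using emeasure_pred_meas[OF P B, of UNIV] by (simp add: ennreal_indicator)
  also have "\<dots> = ennreal (1 / measure P (Q -` {m})) * ennreal (measure P (Q -` {m}))"
    using B P(2) by (simp add: P.emeasure_eq_measure)
  also have "\<dots> = 1"
    using pos by (simp flip: ennreal_mult)
  finally show "emeasure (pred_meas \<phi> m P Q) (space (pred_meas \<phi> m P Q)) = 1"
    by (simp add: pred_meas_def)
qed

lemma tv_dist_pred_meas_bounds:
  assumes Q: "quantizer M Q" "quantizer M Q'"
    and P: "prob_space P" "prob_space P'" "sets P = sets borel" "sets P' = sets borel"
    and pos: "0 < measure P (Q -` {m})"
    and close: "tv_dist (quant_joint M P' Q') (quant_joint M P Q) < measure P (Q -` {m}) / 2"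
  shows "0 \<le> tv_dist (pred_meas \<phi> m P' Q') (pred_meas \<phi> m P Q)"
    and "tv_dist (pred_meas \<phi> m P' Q') (pred_meas \<phi> m P Q)
      \<le> 4 * tv_dist (quant_joint M P' Q') (quant_joint M P Q) / measure P (Q -` {m})"
proof -
  define \<delta> where "\<delta> = tv_dist (quant_joint M P' Q') (quant_joint M P Q)"
  define p where "p = measure P (Q -` {m})"
  define p' where "p' = measure P' (Q' -` {m})"
  interpret P: prob_space P by fact
  have B: "Q -` {m} \<in> sets borel" "Q' -` {m} \<in> sets borel"
    using Q by (auto intro: quantizer_vimage_sets)
  have cell: "\<bar>(\<integral>x. indicator (Q' -` {m}) x * g x \<partial>P') - (\<integral>x. indicator (Q -` {m}) x * g x \<partial>P)\<bar> \<le> \<delta>"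
    if "g \<in> borel_measurable borel" "\<And>x. 0 \<le> g x" "\<And>x. g x \<le> 1" for g
    unfolding \<delta>_def using Q P that by (rule abs_cell_integral_diff_le_tv_dist)
  have "\<bar>p' - p\<bar> \<le> \<delta>"
    unfolding p_def p'_def \<delta>_def using Q P by (rule abs_measure_cell_diff_le_tv_dist)
  with close have "p / 2 < p'"
    unfolding \<delta>_def p_def by linarith
  with pos show "0 \<le> tv_dist (pred_meas \<phi> m P' Q') (pred_meas \<phi> m P Q)"
    using P B by (intro tv_dist_nonneg prob_space_pred_meas) (auto simp: p_def p'_def)
  show "tv_dist (pred_meas \<phi> m P' Q') (pred_meas \<phi> m P Q) \<le> 4 * \<delta> / p"
  proof (rule tv_dist_le)
    fix A
    assume "A \<in> sets (pred_meas \<phi> m P' Q')"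
    then have A: "A \<in> sets borel"
      by (simp add: pred_meas_def)
    have "(\<integral>x. indicator (Q -` {m}) x * transition_prob x A \<partial>P) \<le> p"
      unfolding p_def using B P(3) transition_prob_le_1
      by (intro P.integral_indicator_mult_le_measure) auto
    then show "\<bar>measure (pred_meas \<phi> m P' Q') A - measure (pred_meas \<phi> m P Q) A\<bar> \<le> 4 * \<delta> / p"
      unfolding measure_pred_meas[OF P(1,3) B(1) A] measure_pred_meas[OF P(2,4) B(2) A]
        p_def[symmetric] p'_def[symmetric]
      using pos \<open>\<bar>p' - p\<bar> \<le> \<delta>\<close> \<open>p / 2 < p'\<close>
        cell[OF borel_measurable_transition_prob[OF A] transition_prob_nonneg transition_prob_le_1]
      by (intro abs_divide_diff_le) (auto simp: p_def integral_nonneg_AE transition_prob_nonneg)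
  qed
qed

end

theorem lemma6:
  fixes \<phi> :: "real^'d \<Rightarrow> real^'d \<Rightarrow> real"
    and C :: real and M m :: nat
    and \<pi> :: "(real^'d) measure" and \<pi>s :: "nat \<Rightarrow> (real^'d) measure"
    and Q :: "real^'d \<Rightarrow> nat" and Qs :: "nat \<Rightarrow> real^'d \<Rightarrow> nat"
  assumes phi_meas: "(\<lambda>(x, z). \<phi> x z) \<in> borel_measurable (borel \<Otimes>\<^sub>M borel)"
    and phi_nonneg: "\<And>x z. 0 \<le> \<phi> x z"
    and phi_density: "\<And>x. (\<integral>\<^sup>+ z. ennreal (\<phi> x z) \<partial>lborel) = 1"
    and phi_bounded: "\<And>x z. \<phi> x z \<le> C"
    and pi_prob: "prob_space \<pi>" "sets \<pi> = sets borel"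
    and pis_prob: "\<And>n. prob_space (\<pi>s n)" "\<And>n. sets (\<pi>s n) = sets borel"
    and Q_quant: "quantizer M Q"
    and Qs_quant: "\<And>n. quantizer M (Qs n)"
    and conv: "(\<lambda>n. tv_dist (quant_joint M (\<pi>s n) (Qs n)) (quant_joint M \<pi> Q)) \<longlonglongrightarrow> 0"
    and m: "m \<in> {1..M}"
    and pos: "measure \<pi> (Q -` {m}) > 0"
  shows "(\<lambda>n. tv_dist (pred_meas \<phi> m (\<pi>s n) (Qs n)) (pred_meas \<phi> m \<pi> Q)) \<longlonglongrightarrow> 0"
proof -
  interpret transition_density \<phi> C
    using phi_meas phi_nonneg phi_density phi_bounded by unfold_locales
  define \<delta> where "\<delta> n = tv_dist (quant_joint M (\<pi>s n) (Qs n)) (quant_joint M \<pi> Q)" for n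
  define p where "p = measure \<pi> (Q -` {m})"
  have "\<delta> \<longlonglongrightarrow> 0"
    using conv by (simp add: \<delta>_def[abs_def])
  then have close: "eventually (\<lambda>n. \<delta> n < p / 2) sequentially"
    using pos by (intro order_tendstoD(2)) (auto simp: p_def)
  have bounds: "0 \<le> tv_dist (pred_meas \<phi> m (\<pi>s n) (Qs n)) (pred_meas \<phi> m \<pi> Q)"
      "tv_dist (pred_meas \<phi> m (\<pi>s n) (Qs n)) (pred_meas \<phi> m \<pi> Q) \<le> 4 * \<delta> n / p"
    if "\<delta> n < p / 2" for n
    using tv_dist_pred_meas_bounds[OF Q_quant Qs_quant pi_prob(1) pis_prob(1) pi_prob(2) pis_prob(2) pos]
      that by (simp_all add: \<delta>_def p_def)
  have "eventually (\<lambda>n. 0 \<le> tv_dist (pred_meas \<phi> m (\<pi>s n) (Qs n)) (pred_meas \<phi> m \<pi> Q)) sequentially"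
    using close by eventually_elim (rule bounds(1))
  moreover have "eventually (\<lambda>n. tv_dist (pred_meas \<phi> m (\<pi>s n) (Qs n)) (pred_meas \<phi> m \<pi> Q) \<le> 4 * \<delta> n / p) sequentially"
    using close by eventually_elim (rule bounds(2))
  moreover have "(\<lambda>n. 4 * \<delta> n / p) \<longlonglongrightarrow> 0"
    using \<open>\<delta> \<longlonglongrightarrow> 0\<close> by (intro tendsto_divide_zero tendsto_mult_right_zero)
  ultimately show ?thesis
    by (rule tendsto_sandwich[OF _ _ tendsto_const])
qed

end
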